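(* Let $n\ge3$, suppose the generator is $\pi_{\mathrm{gen}}=\pi_{\mathrm{target}}$, and assume rewards lie in $[0,R]$. In the infinite-block-length setting, the sequential Monte Carlo policies satisfy $$\mathbb{E}_{N\sim\mathrm{Poi}(n)|_{>0}}[D_{\mathrm{KL}}(\hat\pi_N\|\pi^\star_\beta)]\le\widetilde{\mathcal{O}}_n\!\left(\frac{e^{2\beta R}}{n^2}\right),$$ and for every fixed $n\ge3$, $$D_{\mathrm{KL}}(\hat\pi_n\|\pi^\star_\beta)\le\widetilde{\mathcal{O}}_n\!\left(\frac{e^{2\beta R}}{n^{3/2}}\right).$$
   Context: Prompts $x$ drawn from $\rho$; $\pi_{\mathrm{target}}$ is a (full-support) conditional distribution over full responses, $r(y|x)\in[0,R]$, $\beta>0$, $\pi^\star_\beta(y|x)\propto\pi_{\mathrm{target}}(y|x)e^{\beta r(y|x)}$. With $\phi_\beta(y|x)=\frac{\pi_{\mathrm{target}}(y|x)}{\pi_{\mathrm{gen}}(y|x)}e^{\beta r(y|x)}$, sequential Monte Carlo with $N$ particles draws $Y_1,\dots,Y_N$ i.i.d. from $\pi_{\mathrm{gen}}(\cdot|x)$ and outputs $Y_i$ with probability $\phi_\beta(Y_i|x)/\sum_j\phi_\beta(Y_j|x)$; $\hat\pi_N$ is its output distribution. $\mathrm{Poi}(n)|_{>0}$ is Poisson with mean $n$ conditioned on being positive. $D_{\mathrm{KL}}(\pi_1\|\pi_2)=\mathbb{E}_{x\sim\rho}D_{\mathrm{KL}}(\pi_1(\cdot|x)\|\pi_2(\cdot|x))$.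 $\widetilde{\mathcal{O}}_n$ hides constants and polylog factors in $n$. *)

theory Defs
  imports "HOL-Probability.Probability"
begin

definition smc_weight ::
  "('x \<Rightarrow> 'y pmf) \<Rightarrow> ('x \<Rightarrow> 'y pmf) \<Rightarrow> ('x \<Rightarrow> 'y \<Rightarrow> real) \<Rightarrow> real \<Rightarrow> 'x \<Rightarrow> 'y \<Rightarrow> real" where
  "smc_weight gen target r \<beta> x y = pmf (target x) y / pmf (gen x) y * exp (\<beta> * r x y)"

definition smc_pmf ::
  "('x \<Rightarrow> 'y pmf) \<Rightarrow> ('x \<Rightarrow> 'y pmf) \<Rightarrow> ('x \<Rightarrow> 'y \<Rightarrow> real) \<Rightarrow> real \<Rightarrow> nat \<Rightarrow> 'x \<Rightarrow> 'y pmf" where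
  "smc_pmf gen target r \<beta> N x =
     bind_pmf (replicate_pmf N (gen x))
       (\<lambda>ys. pmf_of_list
               (map (\<lambda>y. (y, smc_weight gen target r \<beta> x y /
                              sum_list (map (smc_weight gen target r \<beta> x) ys))) ys))"

definition tilted_pmf ::
  "('x \<Rightarrow> 'y pmf) \<Rightarrow> ('x \<Rightarrow> 'y \<Rightarrow> real) \<Rightarrow> real \<Rightarrow> 'x \<Rightarrow> 'y pmf" where
  "tilted_pmf target r \<beta> x =
     embed_pmf (\<lambda>y. pmf (target x) y * exp (\<beta> * r x y) /
                     measure_pmf.expectation (target x) (\<lambda>z. exp (\<beta> * r x z)))"

text \<open>Prompt-averaged KL divergence D_KL(pi1 || pi2) = E_{x~rho} KL(pi1(.|x) || pi2(.|x)),
  in nats, via the library KL_divergence (KL_divergence b M N is the divergence of N from M).\<close>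
definition avg_KL :: "'x pmf \<Rightarrow> ('x \<Rightarrow> 'y pmf) \<Rightarrow> ('x \<Rightarrow> 'y pmf) \<Rightarrow> real" where
  "avg_KL \<rho> p1 p2 =
     measure_pmf.expectation \<rho> (\<lambda>x. KL_divergence (exp 1) (measure_pmf (p2 x)) (measure_pmf (p1 x)))"

definition pos_poisson_pmf :: "real \<Rightarrow> nat pmf" where
  "pos_poisson_pmf n = cond_pmf (poisson_pmf n) {0<..}"

end

theory Submission
  imports Defs
begin

text \<open>
  With the target as proposal the SMC weights are \<open>w = exp (\<beta> r)\<close>, with values in \<open>[1, M]\<close>
  for \<open>M = exp (\<beta> R)\<close>. By exchangeability of the particles, \<open>N\<close>-particle resampling outputs \<open>y\<close>
  with likelihood ratio \<open>N E[w] E[1 / (w y + S)]\<close> against the tilted target, where \<open>S\<close> is the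
  sum of \<open>N - 1\<close> independent weights. Expanding \<open>1 / s\<close> to second order around \<open>N E[w]\<close>, with
  an exact nonnegative remainder, and using the mean and variance of \<open>S\<close> shows that this ratio
  is within \<open>2 M / N + M\<^sup>2 / N\<^sup>2\<close> of \<open>1\<close>; it is also at most \<open>M\<close>. Hence the divergence is at most
  \<open>min ((2 M / N + M\<^sup>2 / N\<^sup>2)\<^sup>2) (ln M) \<le> 9 M\<^sup>2 (1 + ln N) / N\<^sup>2\<close>, which gives the bound for
  fixed \<open>n\<close>. Averaging over a Poisson number of particles conditioned to be positive only costs
  a constant factor, because \<open>E[1 / (N + 1)] \<le> 1 / n\<close> and \<open>E[1 / ((N + 1) (N + 2))] \<le> 1 / n\<^sup>2\<close>.
\<close>

section \<open>Expectations under probability mass functions\<close>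

lemma integrable_measure_pmf_bounded:
  fixes f :: "'a \<Rightarrow> real"
  assumes "\<And>x. x \<in> set_pmf p \<Longrightarrow> \<bar>f x\<bar> \<le> B"
  shows "integrable (measure_pmf p) f"
  by (rule measure_pmf.integrable_const_bound[where B=B]) (auto simp: AE_measure_pmf_iff assms)

lemma abs_expectation_pmf_le:
  fixes f :: "'a \<Rightarrow> real"
  assumes "\<And>x. x \<in> set_pmf p \<Longrightarrow> \<bar>f x\<bar> \<le> B"
  shows "\<bar>measure_pmf.expectation p f\<bar> \<le> B"
proof -
  have "\<bar>measure_pmf.expectation p f\<bar> \<le> measure_pmf.expectation p (\<lambda>x. \<bar>f x\<bar>)"
    by (rule integral_abs_bound)
  also have "\<dots> \<le> B"
    using assms by (intro measure_pmf.integral_le_const integrable_measure_pmf_bounded[where B=B])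
      (auto simp: AE_measure_pmf_iff)
  finally show ?thesis .
qed

lemma expectation_bind_pmf_bounded:
  fixes f :: "'b \<Rightarrow> real"
  assumes bounded: "\<And>z. z \<in> set_pmf (bind_pmf p q) \<Longrightarrow> \<bar>f z\<bar> \<le> B"
  shows "measure_pmf.expectation (bind_pmf p q) f =
         measure_pmf.expectation p (\<lambda>x. measure_pmf.expectation (q x) f)"
proof -
  define g where "g z = (if z \<in> set_pmf (bind_pmf p q) then f z else 0)" for z
  obtain z0 where "z0 \<in> set_pmf (bind_pmf p q)"
    using set_pmf_not_empty[of "bind_pmf p q"] by blast
  then have "0 \<le> B" using bounded by force
  then have g_bounded: "\<bar>g z\<bar> \<le> B" for z using bounded by (auto simp: g_def)
  have "measure_pmf.expectation (bind_pmf p q) f = measure_pmf.expectation (bind_pmf p q) g"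
    by (intro integral_cong_AE) (auto simp: AE_measure_pmf_iff g_def)
  also have "\<dots> = measure_pmf.expectation p (\<lambda>x. measure_pmf.expectation (q x) g)"
    unfolding measure_pmf_bind
    by (rule integral_bind[where K="count_space UNIV" and B=B and B'=1])
       (use g_bounded measurable_measure_pmf[of q] in \<open>auto simp: AE_measure_pmf_iff measure_pmf.emeasure_space_1\<close>)
  also have "\<dots> = measure_pmf.expectation p (\<lambda>x. measure_pmf.expectation (q x) f)"
    by (intro integral_cong_AE) (auto simp: AE_measure_pmf_iff g_def intro!: integral_cong_AE)
  finally show ?thesis .
qed

lemma expectation_replicate_pmf_Suc:
  fixes f :: "'a list \<Rightarrow> real"
  assumes "\<And>xs. xs \<in> set_pmf (replicate_pmf (Suc n) p) \<Longrightarrow> \<bar>f xs\<bar> \<le> B"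
  shows "measure_pmf.expectation (replicate_pmf (Suc n) p) f =
         measure_pmf.expectation p (\<lambda>x. measure_pmf.expectation (replicate_pmf n p) (\<lambda>xs. f (x # xs)))"
proof -
  have "replicate_pmf (Suc n) p = bind_pmf p (\<lambda>x. map_pmf ((#) x) (replicate_pmf n p))"
    by (simp add: map_pmf_def)
  show ?thesis
    using assms unfolding \<open>replicate_pmf (Suc n) p = _\<close>
    by (subst expectation_bind_pmf_bounded) auto
qed

lemma expectation_pmf_le_const:
  fixes f :: "'a \<Rightarrow> real"
  assumes "\<And>x. x \<in> set_pmf p \<Longrightarrow> f x \<le> c" and "0 \<le> c"
  shows "measure_pmf.expectation p f \<le> c"
proof (cases "integrable (measure_pmf p) f")
  case True
  then show ?thesis by (rule measure_pmf.integral_le_const) (auto simp: AE_measure_pmf_iff assms)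
qed (simp add: not_integrable_integral_eq assms)

lemma expectation_pmf_mono:
  fixes f g :: "'a \<Rightarrow> real"
  assumes "\<And>x. x \<in> set_pmf p \<Longrightarrow> f x \<le> g x" and "\<And>x. 0 \<le> g x"
    and "integrable (measure_pmf p) g"
  shows "measure_pmf.expectation p f \<le> measure_pmf.expectation p g"
proof (cases "integrable (measure_pmf p) f")
  case True
  then show ?thesis by (intro integral_mono_AE assms) (auto simp: AE_measure_pmf_iff assms)
qed (simp add: not_integrable_integral_eq assms integral_nonneg)

lemma expectation_pmf_le_dominated:
  fixes g :: "'a \<Rightarrow> real"
  assumes dom: "\<And>x. pmf q x \<le> c * pmf p x" and g: "\<And>x. 0 \<le> g x"
    and int: "integrable (measure_pmf p) g"
  shows "measure_pmf.expectation q g \<le> c * measure_pmf.expectation p g"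
proof -
  have c: "0 \<le> c"
  proof -
    obtain x where "x \<in> set_pmf q" using set_pmf_not_empty[of q] by blast
    then have "0 < c * pmf p x" using dom[of x] pmf_positive[of x q] by linarith
    then show ?thesis by (simp add: zero_less_mult_iff)
  qed
  have "(\<integral>\<^sup>+x. g x \<partial>q) = (\<integral>\<^sup>+x. ennreal (pmf q x) * ennreal (g x) \<partial>count_space UNIV)"
    by (simp add: nn_integral_measure_pmf)
  also have "\<dots> \<le> (\<integral>\<^sup>+x. ennreal c * (ennreal (pmf p x) * ennreal (g x)) \<partial>count_space UNIV)"
  proof (intro nn_integral_mono)
    fix x
    have "pmf q x * g x \<le> c * pmf p x * g x" using dom g by (intro mult_right_mono)
    then show "ennreal (pmf q x) * ennreal (g x) \<le> ennreal c * (ennreal (pmf p x) * ennreal (g x))"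
      using c g by (simp add: ennreal_mult[symmetric] mult.assoc ennreal_leI)
  qed
  also have "\<dots> = ennreal c * (\<integral>\<^sup>+x. g x \<partial>p)"
    by (simp add: nn_integral_cmult nn_integral_measure_pmf)
  also have "(\<integral>\<^sup>+x. g x \<partial>p) = ennreal (measure_pmf.expectation p g)"
    using int g by (intro nn_integral_eq_integral) auto
  finally have le: "(\<integral>\<^sup>+x. g x \<partial>q) \<le> ennreal (c * measure_pmf.expectation p g)"
    using c g by (simp add: ennreal_mult integral_nonneg)
  have "measure_pmf.expectation q g = enn2real (\<integral>\<^sup>+x. g x \<partial>q)"
    using g by (intro integral_eq_nn_integral) auto
  also have "\<dots> \<le> c * measure_pmf.expectation p g"
    using le c g by (intro order.trans[OF enn2real_mono[OF le]]) (auto simp: integral_nonneg)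
  finally show ?thesis .
qed

lemma expectation_inverse_expansion:
  fixes s :: "'a \<Rightarrow> real"
  assumes pos: "\<And>x. x \<in> set_pmf q \<Longrightarrow> 0 < s x" and "a \<noteq> 0"
    and "integrable (measure_pmf q) s" and "integrable (measure_pmf q) (\<lambda>x. (s x - a)\<^sup>2 / s x)"
  shows "a * measure_pmf.expectation q (\<lambda>x. 1 / s x) - 1 =
    (a - measure_pmf.expectation q s) / a + measure_pmf.expectation q (\<lambda>x. (s x - a)\<^sup>2 / s x) / a"
proof -
  define r where "r x = (s x - a)\<^sup>2 / s x" for x
  have "1 / t = 2 / a - t / a\<^sup>2 + (t - a)\<^sup>2 / t / a\<^sup>2" if "0 < t" for t
    using that \<open>a \<noteq> 0\<close> by (simp add: field_simps power2_eq_square)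
  then have "measure_pmf.expectation q (\<lambda>x. 1 / s x) =
      measure_pmf.expectation q (\<lambda>x. 2 / a - s x / a\<^sup>2 + r x / a\<^sup>2)"
    using pos by (intro integral_cong_AE) (auto simp: AE_measure_pmf_iff r_def)
  also have "\<dots> = 2 / a - measure_pmf.expectation q s / a\<^sup>2 + measure_pmf.expectation q r / a\<^sup>2"
    using assms(3,4) unfolding r_def[symmetric] by simp
  finally show ?thesis
    using \<open>a \<noteq> 0\<close> unfolding r_def[symmetric] by (simp add: field_simps power2_eq_square)
qed

lemma expectation_inverse_approx:
  fixes s :: "'a \<Rightarrow> real"
  assumes lower: "\<And>x. x \<in> set_pmf q \<Longrightarrow> L \<le> s x" and upper: "\<And>x. x \<in> set_pmf q \<Longrightarrow> s x \<le> U"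
    and L: "0 < L" and a: "0 < a"
  shows "\<bar>a * measure_pmf.expectation q (\<lambda>x. 1 / s x) - 1\<bar> \<le>
    \<bar>a - measure_pmf.expectation q s\<bar> / a + measure_pmf.expectation q (\<lambda>x. (s x - a)\<^sup>2) / (a * L)"
proof -
  define r where "r x = (s x - a)\<^sup>2 / s x" for x
  have s_pos: "0 < s x" if "x \<in> set_pmf q" for x using lower[OF that] L by linarith
  have square_le: "(s x - a)\<^sup>2 \<le> (U + a)\<^sup>2" if "x \<in> set_pmf q" for x
  proof -
    have "\<bar>s x - a\<bar> \<le> U + a" using upper[OF that] s_pos[OF that] a by linarith
    from power_mono[OF this abs_ge_zero, of 2] show ?thesis by simp
  qed
  have r_bounds: "0 \<le> r x" "r x \<le> (s x - a)\<^sup>2 / L" if "x \<in> set_pmf q" for x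
    using s_pos[OF that] lower[OF that] L by (auto simp: r_def intro!: divide_left_mono)
  have int_s: "integrable (measure_pmf q) s"
    using upper s_pos by (intro integrable_measure_pmf_bounded[where B=U]) force
  have int_square: "integrable (measure_pmf q) (\<lambda>x. (s x - a)\<^sup>2)"
    using square_le by (intro integrable_measure_pmf_bounded) auto
  have int_r: "integrable (measure_pmf q) r"
  proof (rule integrable_measure_pmf_bounded[where B="(U + a)\<^sup>2 / L"])
    fix x assume x: "x \<in> set_pmf q"
    have "r x \<le> (U + a)\<^sup>2 / L"
      using r_bounds(2)[OF x] divide_right_mono[OF square_le[OF x], of L] L by linarith
    then show "\<bar>r x\<bar> \<le> (U + a)\<^sup>2 / L" using r_bounds(1)[OF x] by simp
  qed
  have "0 \<le> measure_pmf.expectation q r"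
    using r_bounds(1) by (intro integral_nonneg_AE) (auto simp: AE_measure_pmf_iff)
  then have "\<bar>measure_pmf.expectation q r / a\<bar> = measure_pmf.expectation q r / a"
    using a by simp
  moreover have "measure_pmf.expectation q r \<le> measure_pmf.expectation q (\<lambda>x. (s x - a)\<^sup>2) / L"
    using r_bounds(2) int_r int_square
    by (subst integral_divide_zero[symmetric], intro integral_mono_AE) (auto simp: AE_measure_pmf_iff)
  then have "measure_pmf.expectation q r / a \<le> measure_pmf.expectation q (\<lambda>x. (s x - a)\<^sup>2) / L / a"
    using a by (intro divide_right_mono) auto
  moreover have "a * measure_pmf.expectation q (\<lambda>x. 1 / s x) - 1 =
      (a - measure_pmf.expectation q s) / a + measure_pmf.expectation q r / a"
    using s_pos a int_s int_r unfolding r_def[abs_def] by (intro expectation_inverse_expansion) auto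
  ultimately show ?thesis
    using abs_triangle_ineq[of "(a - measure_pmf.expectation q s) / a" "measure_pmf.expectation q r / a"] a
    by (simp add: mult.commute)
qed

section \<open>Sums of independent weights\<close>

locale bounded_weight =
  fixes p :: "'a pmf" and w :: "'a \<Rightarrow> real" and M :: real
  assumes weight_nonneg: "0 \<le> w y" and weight_le: "w y \<le> M"
begin

abbreviation wsum :: "'a list \<Rightarrow> real" where
  "wsum ys \<equiv> sum_list (map w ys)"

abbreviation mean :: real where
  "mean \<equiv> measure_pmf.expectation p w"

abbreviation var :: real where
  "var \<equiv> measure_pmf.variance p w"

lemma wsum_nonneg: "0 \<le> wsum ys"
  by (induction ys) (auto intro: add_nonneg_nonneg weight_nonneg)

lemma wsum_le: "wsum ys \<le> length ys * M"
  by (induction ys) (auto simp: algebra_simps intro: add_mono weight_le)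

lemma wsum_replicate_pmf_le:
  "ys \<in> set_pmf (replicate_pmf n p) \<Longrightarrow> wsum ys \<le> n * M"
  using wsum_le[of ys] by (simp add: set_replicate_pmf)

lemma integrable_weight [simp]: "integrable (measure_pmf p) w"
  using weight_nonneg weight_le by (intro integrable_measure_pmf_bounded[where B=M]) auto

lemma square_weight_minus_le: "(w x - c)\<^sup>2 \<le> (M + \<bar>c\<bar>)\<^sup>2"
proof -
  have "\<bar>w x - c\<bar> \<le> M + \<bar>c\<bar>" using weight_nonneg[of x] weight_le[of x] by linarith
  from power_mono[OF this abs_ge_zero, of 2] show ?thesis by simp
qed

lemma abs_wsum_replicate_pmf_le:
  "ys \<in> set_pmf (replicate_pmf n p) \<Longrightarrow> \<bar>wsum ys\<bar> \<le> n * M"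
  using wsum_nonneg[of ys] wsum_replicate_pmf_le[of ys n] by simp

lemma square_wsum_minus_le:
  assumes "ys \<in> set_pmf (replicate_pmf n p)"
  shows "\<bar>(wsum ys - c)\<^sup>2\<bar> \<le> (n * M + \<bar>c\<bar>)\<^sup>2"
proof -
  have "\<bar>wsum ys - c\<bar> \<le> n * M + \<bar>c\<bar>"
    using wsum_nonneg[of ys] wsum_replicate_pmf_le[OF assms] by linarith
  from power_mono[OF this abs_ge_zero, of 2] show ?thesis by simp
qed

lemma integrable_weight_square [simp]: "integrable (measure_pmf p) (\<lambda>x. (w x - c)\<^sup>2)"
  using square_weight_minus_le by (intro integrable_measure_pmf_bounded) auto

lemma integrable_wsum [simp]: "integrable (measure_pmf (replicate_pmf n p)) wsum"
  using abs_wsum_replicate_pmf_le by (rule integrable_measure_pmf_bounded)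

lemma integrable_wsum_square [simp]:
  "integrable (measure_pmf (replicate_pmf n p)) (\<lambda>ys. (wsum ys - c)\<^sup>2)"
  using square_wsum_minus_le by (rule integrable_measure_pmf_bounded)

lemma expectation_wsum: "measure_pmf.expectation (replicate_pmf n p) wsum = n * mean"
proof (induction n)
  case (Suc n)
  have "measure_pmf.expectation (replicate_pmf (Suc n) p) wsum =
      measure_pmf.expectation p (\<lambda>x. measure_pmf.expectation (replicate_pmf n p) (\<lambda>ys. wsum (x # ys)))"
    by (rule expectation_replicate_pmf_Suc) (rule abs_wsum_replicate_pmf_le)
  also have "\<dots> = measure_pmf.expectation p (\<lambda>x. w x + n * mean)"
    by (simp add: Suc.IH)
  finally show ?case by (simp add: algebra_simps)
qed simp

lemma expectation_wsum_centered_square: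
  "measure_pmf.expectation (replicate_pmf n p) (\<lambda>ys. (wsum ys - n * mean)\<^sup>2) = n * var"
proof (induction n)
  case (Suc n)
  have split: "(wsum (x # ys) - Suc n * mean)\<^sup>2 =
      (w x - mean)\<^sup>2 + 2 * (w x - mean) * wsum ys - 2 * (w x - mean) * (n * mean) + (wsum ys - n * mean)\<^sup>2"
    for x ys by (simp add: power2_eq_square algebra_simps)
  have "measure_pmf.expectation (replicate_pmf (Suc n) p) (\<lambda>ys. (wsum ys - Suc n * mean)\<^sup>2) =
      measure_pmf.expectation p (\<lambda>x. measure_pmf.expectation (replicate_pmf n p)
        (\<lambda>ys. (wsum (x # ys) - Suc n * mean)\<^sup>2))"
    by (rule expectation_replicate_pmf_Suc) (rule square_wsum_minus_le)
  also have "\<dots> = measure_pmf.expectation p (\<lambda>x. (w x - mean)\<^sup>2 + n * var)"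
    by (simp only: split) (simp add: Suc.IH expectation_wsum)
  finally show ?case by (simp add: algebra_simps)
qed simp

lemma expectation_wsum_shifted_square:
  "measure_pmf.expectation (replicate_pmf n p) (\<lambda>ys. (wsum ys - n * mean + c)\<^sup>2) = n * var + c\<^sup>2"
proof -
  have split: "(wsum ys - n * mean + c)\<^sup>2 = (wsum ys - n * mean)\<^sup>2 + 2 * c * wsum ys - 2 * c * (n * mean) + c\<^sup>2"
    for ys by (simp add: power2_eq_square algebra_simps)
  show ?thesis
    by (simp only: split) (simp add: expectation_wsum expectation_wsum_centered_square)
qed

lemma abs_count_mult_replicate_pmf_le:
  assumes "ys \<in> set_pmf (replicate_pmf n p)" and "\<And>t. \<bar>h t\<bar> \<le> B"
  shows "\<bar>real (count_list ys y) * h (wsum ys)\<bar> \<le> n * B"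
proof -
  have "real (count_list ys y) \<le> n"
    using count_le_length[of ys y] assms(1) by (simp add: set_replicate_pmf)
  then show ?thesis
    unfolding abs_mult using assms(2) by (intro mult_mono) auto
qed

lemma expectation_count_Cons_mult:
  fixes h :: "real \<Rightarrow> real"
  assumes bounded: "\<And>t. \<bar>h t\<bar> \<le> B"
  shows "measure_pmf.expectation (replicate_pmf n p)
      (\<lambda>ys. real (count_list (x # ys) y) * h (wsum (x # ys))) =
    indicator {y} x * measure_pmf.expectation (replicate_pmf n p) (\<lambda>ys. h (w y + wsum ys)) +
    measure_pmf.expectation (replicate_pmf n p) (\<lambda>ys. real (count_list ys y) * h (w x + wsum ys))"
proof -
  have count_Cons: "real (count_list (x # ys) y) = indicator {y} x + real (count_list ys y)" for ys
    by (simp add: indicator_def)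
  have "integrable (measure_pmf (replicate_pmf n p)) (\<lambda>ys. real (count_list ys y) * h (w x + wsum ys))"
    using abs_count_mult_replicate_pmf_le[where h="\<lambda>t. h (w x + t)", OF _ bounded]
    by (rule integrable_measure_pmf_bounded)
  moreover have "integrable (measure_pmf (replicate_pmf n p)) (\<lambda>ys. h (c + wsum ys))" for c
    by (rule integrable_measure_pmf_bounded[where B=B]) (rule bounded)
  ultimately have "measure_pmf.expectation (replicate_pmf n p)
      (\<lambda>ys. real (count_list (x # ys) y) * h (wsum (x # ys))) =
    indicator {y} x * measure_pmf.expectation (replicate_pmf n p) (\<lambda>ys. h (w x + wsum ys)) +
    measure_pmf.expectation (replicate_pmf n p) (\<lambda>ys. real (count_list ys y) * h (w x + wsum ys))"
    by (simp only: count_Cons distrib_right sum_list.Cons list.map) (simp del: replicate_pmf.simps)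
  also have "indicator {y} x * measure_pmf.expectation (replicate_pmf n p) (\<lambda>ys. h (w x + wsum ys)) =
      indicator {y} x * measure_pmf.expectation (replicate_pmf n p) (\<lambda>ys. h (w y + wsum ys))"
    by (cases "x = y") auto
  finally show ?thesis .
qed

lemma expectation_count_mult:
  fixes h :: "real \<Rightarrow> real"
  assumes "\<And>t. \<bar>h t\<bar> \<le> B"
  shows "measure_pmf.expectation (replicate_pmf (Suc n) p) (\<lambda>ys. real (count_list ys y) * h (wsum ys)) =
    Suc n * pmf p y * measure_pmf.expectation (replicate_pmf n p) (\<lambda>ys. h (w y + wsum ys))"
  using assms
proof (induction n arbitrary: h)
  case 0
  have "measure_pmf.expectation (replicate_pmf (Suc 0) p) (\<lambda>ys. real (count_list ys y) * h (wsum ys)) =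
      measure_pmf.expectation p (\<lambda>x. h (w y) * indicator {y} x)"
    unfolding One_nat_def[symmetric] replicate_pmf_1 integral_map_pmf
    by (rule Bochner_Integration.integral_cong) (auto simp: indicator_def)
  then show ?case by (simp add: measure_pmf_single)
next
  case (Suc n)
  define E where "E = measure_pmf.expectation (replicate_pmf (Suc n) p) (\<lambda>ys. h (w y + wsum ys))"
  define F where "F x = measure_pmf.expectation (replicate_pmf n p) (\<lambda>ys. h (w y + (w x + wsum ys)))" for x
  have inner: "measure_pmf.expectation (replicate_pmf (Suc n) p)
        (\<lambda>ys. real (count_list (x # ys) y) * h (wsum (x # ys))) =
      indicator {y} x * E + Suc n * pmf p y * F x" for x
  proof -
    have "measure_pmf.expectation (replicate_pmf (Suc n) p)
        (\<lambda>ys. real (count_list (x # ys) y) * h (wsum (x # ys))) = indicator {y} x * E +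
      measure_pmf.expectation (replicate_pmf (Suc n) p) (\<lambda>ys. real (count_list ys y) * h (w x + wsum ys))"
      unfolding E_def by (rule expectation_count_Cons_mult[where h=h, OF Suc.prems])
    also have "measure_pmf.expectation (replicate_pmf (Suc n) p)
        (\<lambda>ys. real (count_list ys y) * h (w x + wsum ys)) = Suc n * pmf p y * F x"
      unfolding F_def using Suc.IH[of "\<lambda>t. h (w x + t)", OF Suc.prems] by (simp only: add.left_commute)
    finally show ?thesis .
  qed
  have "integrable (measure_pmf p) F"
    unfolding F_def[abs_def] using Suc.prems by (intro integrable_measure_pmf_bounded abs_expectation_pmf_le)
  moreover have "integrable (measure_pmf p) (\<lambda>x. indicator {y} x * E)"
    by (rule integrable_measure_pmf_bounded[where B="\<bar>E\<bar>"]) (simp add: indicator_def)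
  moreover have "measure_pmf.expectation p F = E"
    using expectation_replicate_pmf_Suc[of n p "\<lambda>ys. h (w y + wsum ys)" B] Suc.prems
    by (simp add: E_def F_def[abs_def] del: replicate_pmf.simps)
  moreover have "measure_pmf.expectation (replicate_pmf (Suc (Suc n)) p)
      (\<lambda>ys. real (count_list ys y) * h (wsum ys)) =
    measure_pmf.expectation p (\<lambda>x. measure_pmf.expectation (replicate_pmf (Suc n) p)
      (\<lambda>ys. real (count_list (x # ys) y) * h (wsum (x # ys))))"
    by (rule expectation_replicate_pmf_Suc) (rule abs_count_mult_replicate_pmf_le[OF _ Suc.prems])
  ultimately show ?case
    by (simp only: inner) (simp add: measure_pmf_single E_def algebra_simps del: replicate_pmf.simps)
qed

end

section \<open>Self-normalised resampling\<close>

definition resample_pmf :: "'a pmf \<Rightarrow> ('a \<Rightarrow> real) \<Rightarrow> nat \<Rightarrow> 'a pmf" where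
  "resample_pmf p w N =
     bind_pmf (replicate_pmf N p) (\<lambda>ys. pmf_of_list (map (\<lambda>y. (y, w y / sum_list (map w ys))) ys))"

lemma sum_list_filter_fst_eq:
  "sum_list (map snd (filter (\<lambda>z. fst z = y) (map (\<lambda>z. (z, g z)) ys))) = real (count_list ys y) * g y"
  by (induction ys) (auto simp: algebra_simps)

lemma pmf_pmf_of_list_normalized:
  fixes w :: "'a \<Rightarrow> real"
  assumes "\<And>y. y \<in> set ys \<Longrightarrow> 0 \<le> w y" and "0 < sum_list (map w ys)"
  shows "pmf (pmf_of_list (map (\<lambda>y. (y, w y / sum_list (map w ys))) ys)) y =
    w y * real (count_list ys y) / sum_list (map w ys)"
proof -
  have "pmf_of_list_wf (map (\<lambda>y. (y, w y / sum_list (map w ys))) ys)"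
    using assms by (intro pmf_of_list_wfI) (auto simp: o_def divide_inverse sum_list_mult_const)
  then show ?thesis
    by (simp add: pmf_pmf_of_list sum_list_filter_fst_eq)
qed

locale importance_weight = bounded_weight +
  assumes weight_ge_1: "y \<in> set_pmf p \<Longrightarrow> 1 \<le> w y"
begin

lemma wsum_ge_length: "set ys \<subseteq> set_pmf p \<Longrightarrow> length ys \<le> wsum ys"
  by (induction ys) (auto intro!: add_mono weight_ge_1)

lemma wsum_replicate_pmf_ge: "ys \<in> set_pmf (replicate_pmf n p) \<Longrightarrow> n \<le> wsum ys"
  using wsum_ge_length[of ys] by (auto simp: set_replicate_pmf in_lists_conv_set)

lemma one_le_M: "1 \<le> M"
proof -
  obtain y where "y \<in> set_pmf p" using set_pmf_not_empty[of p] by blast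
  then show ?thesis using weight_ge_1 weight_le order.trans by blast
qed

lemma one_le_mean: "1 \<le> mean"
  using weight_ge_1 by (intro measure_pmf.integral_ge_const) (auto simp: AE_measure_pmf_iff)

lemma mean_le_M: "mean \<le> M"
  using weight_le by (intro measure_pmf.integral_le_const) (auto simp: AE_measure_pmf_iff)

lemma var_le: "var \<le> M * mean"
proof -
  have "var = measure_pmf.expectation p (\<lambda>x. (w x)\<^sup>2) - mean\<^sup>2"
    using integrable_weight_square[of 0] by (intro measure_pmf.variance_eq) auto
  moreover have "measure_pmf.expectation p (\<lambda>x. (w x)\<^sup>2) \<le> measure_pmf.expectation p (\<lambda>x. M * w x)"
    using integrable_weight_square[of 0] weight_nonneg weight_le
    by (intro integral_mono) (auto simp: power2_eq_square mult_right_mono)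
  moreover have "measure_pmf.expectation p (\<lambda>x. M * w x) = M * mean" by simp
  ultimately show ?thesis
    using zero_le_power2[of mean] by linarith
qed

lemma pmf_resample_pmf:
  "pmf (resample_pmf p w (Suc n)) y =
    Suc n * pmf p y * w y * measure_pmf.expectation (replicate_pmf n p) (\<lambda>ys. 1 / (w y + wsum ys))"
proof -
  \<comment> \<open>\<open>h\<close> is bounded and agrees with \<open>\<lambda>t. 1 / t\<close> on all attainable weight sums.\<close>
  define h :: "real \<Rightarrow> real" where "h t = 1 / max 1 t" for t
  have h_bounded: "\<bar>h t\<bar> \<le> 1" for t by (simp add: h_def)
  have "pmf (resample_pmf p w (Suc n)) y =
      measure_pmf.expectation (replicate_pmf (Suc n) p) (\<lambda>ys. w y * (real (count_list ys y) * h (wsum ys)))"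
    unfolding resample_pmf_def pmf_bind
  proof (intro integral_cong_AE AE_pmfI)
    fix ys assume ys: "ys \<in> set_pmf (replicate_pmf (Suc n) p)"
    then have "1 \<le> wsum ys" using wsum_replicate_pmf_ge[OF ys] by simp
    then show "pmf (pmf_of_list (map (\<lambda>y. (y, w y / wsum ys)) ys)) y =
        w y * (real (count_list ys y) * h (wsum ys))"
      using weight_nonneg by (simp add: pmf_pmf_of_list_normalized h_def)
  qed simp_all
  also have "\<dots> = Suc n * pmf p y * w y * measure_pmf.expectation (replicate_pmf n p) (\<lambda>ys. h (w y + wsum ys))"
    using expectation_count_mult[of h 1] h_bounded by (simp del: replicate_pmf.simps)
  also have "\<dots> = Suc n * pmf p y * w y * measure_pmf.expectation (replicate_pmf n p) (\<lambda>ys. 1 / (w y + wsum ys))"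
  proof (cases "y \<in> set_pmf p")
    case True
    then have "1 \<le> w y + wsum ys" for ys using weight_ge_1 wsum_nonneg[of ys] by (meson add_increasing2)
    then show ?thesis by (simp add: h_def)
  qed (simp add: set_pmf_eq)
  finally show ?thesis .
qed

lemma expectation_deviation_le:
  assumes "y \<in> set_pmf p"
  shows "measure_pmf.expectation (replicate_pmf n p) (\<lambda>ys. (w y + wsum ys - Suc n * mean)\<^sup>2)
    / (Suc n * mean * Suc n) \<le> M\<^sup>2 / (Suc n)\<^sup>2 + M / Suc n"
proof -
  define N where "N = real (Suc n)"
  have N: "1 \<le> N" by (simp add: N_def)
  have "w y + wsum ys - Suc n * mean = wsum ys - n * mean + (w y - mean)" for ys
    by (simp add: algebra_simps)
  then have "measure_pmf.expectation (replicate_pmf n p) (\<lambda>ys. (w y + wsum ys - Suc n * mean)\<^sup>2) =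
      n * var + (w y - mean)\<^sup>2"
    by (simp only: expectation_wsum_shifted_square)
  also have "\<dots> \<le> N * (M * mean) + M\<^sup>2"
  proof (intro add_mono)
    show "n * var \<le> N * (M * mean)"
      using var_le one_le_mean one_le_M by (intro mult_mono) (auto simp: N_def integral_nonneg)
    have "\<bar>w y - mean\<bar> \<le> M"
      using weight_ge_1[OF assms] weight_le[of y] one_le_mean mean_le_M by linarith
    from power_mono[OF this abs_ge_zero, of 2] show "(w y - mean)\<^sup>2 \<le> M\<^sup>2" by simp
  qed
  finally have "measure_pmf.expectation (replicate_pmf n p) (\<lambda>ys. (w y + wsum ys - Suc n * mean)\<^sup>2)
      / (N * mean * N) \<le> (N * (M * mean) + M\<^sup>2) / (N * mean * N)"
    using one_le_mean N by (intro divide_right_mono) auto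
  also have "\<dots> = M\<^sup>2 / N\<^sup>2 / mean + M / N"
    using one_le_mean N by (simp add: field_simps power2_eq_square)
  also have "M\<^sup>2 / N\<^sup>2 / mean \<le> M\<^sup>2 / N\<^sup>2"
    using divide_left_mono[of 1 mean "M\<^sup>2 / N\<^sup>2"] one_le_mean by simp
  finally show ?thesis by (simp add: N_def)
qed

definition resample_ratio :: "nat \<Rightarrow> 'a \<Rightarrow> real" where
  "resample_ratio n y = Suc n * mean * measure_pmf.expectation (replicate_pmf n p) (\<lambda>ys. 1 / (w y + wsum ys))"

lemma pmf_resample_pmf_eq_ratio:
  "pmf (resample_pmf p w (Suc n)) y = pmf p y * w y / mean * resample_ratio n y"
  using one_le_mean by (simp add: pmf_resample_pmf resample_ratio_def)

lemma resample_ratio_nonneg: "0 \<le> resample_ratio n y"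
  using one_le_mean weight_nonneg wsum_nonneg
  by (auto simp: resample_ratio_def intro!: mult_nonneg_nonneg integral_nonneg add_nonneg_nonneg)

lemma resample_ratio_le:
  assumes "y \<in> set_pmf p"
  shows "resample_ratio n y \<le> M"
proof -
  have "measure_pmf.expectation (replicate_pmf n p) (\<lambda>ys. 1 / (w y + wsum ys)) \<le> 1 / Suc n"
  proof (rule expectation_pmf_le_const)
    fix ys assume "ys \<in> set_pmf (replicate_pmf n p)"
    then have "Suc n \<le> w y + wsum ys"
      using weight_ge_1[OF assms] wsum_replicate_pmf_ge by force
    then show "1 / (w y + wsum ys) \<le> 1 / Suc n"
      by (intro divide_left_mono) auto
  qed simp
  then have "resample_ratio n y \<le> Suc n * mean * (1 / Suc n)"
    unfolding resample_ratio_def using one_le_mean by (intro mult_left_mono) auto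
  then show ?thesis using mean_le_M by simp
qed

lemma abs_resample_ratio_minus_one_le:
  assumes y: "y \<in> set_pmf p"
  shows "\<bar>resample_ratio n y - 1\<bar> \<le> 2 * M / Suc n + M\<^sup>2 / (Suc n)\<^sup>2"
proof -
  define N where "N = real (Suc n)"
  define a where "a = N * mean"
  have N: "1 \<le> N" by (simp add: N_def)
  have mean: "1 \<le> mean" "mean \<le> M" by (fact one_le_mean, fact mean_le_M)
  have wy: "1 \<le> w y" "w y \<le> M" by (fact weight_ge_1[OF y], fact weight_le)
  have a: "0 < a" using N mean by (simp add: a_def)
  have approx: "\<bar>a * measure_pmf.expectation (replicate_pmf n p) (\<lambda>ys. 1 / (w y + wsum ys)) - 1\<bar> \<le>
      \<bar>a - measure_pmf.expectation (replicate_pmf n p) (\<lambda>ys. w y + wsum ys)\<bar> / a +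
      measure_pmf.expectation (replicate_pmf n p) (\<lambda>ys. (w y + wsum ys - a)\<^sup>2) / (a * N)"
  proof (rule expectation_inverse_approx)
    fix ys assume ys: "ys \<in> set_pmf (replicate_pmf n p)"
    show "N \<le> w y + wsum ys" using wsum_replicate_pmf_ge[OF ys] wy by (simp add: N_def)
    show "w y + wsum ys \<le> w y + n * M" using wsum_replicate_pmf_le[OF ys] by simp
  qed (use N a in auto)
  have gap: "a - measure_pmf.expectation (replicate_pmf n p) (\<lambda>ys. w y + wsum ys) = mean - w y"
    by (simp add: expectation_wsum a_def N_def algebra_simps)
  have "\<bar>mean - w y\<bar> / a \<le> M / N"
  proof -
    have "\<bar>mean - w y\<bar> / a \<le> M / a" using mean wy a by (intro divide_right_mono) auto
    also have "M / a \<le> M / N" using mean wy N by (intro divide_left_mono) (auto simp: a_def)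
    finally show ?thesis .
  qed
  then have first:
    "\<bar>a - measure_pmf.expectation (replicate_pmf n p) (\<lambda>ys. w y + wsum ys)\<bar> / a \<le> M / N"
    unfolding gap .
  have "measure_pmf.expectation (replicate_pmf n p) (\<lambda>ys. (w y + wsum ys - a)\<^sup>2) / (a * N)
      \<le> M\<^sup>2 / N\<^sup>2 + M / N"
    using expectation_deviation_le[OF y, of n] by (simp add: a_def N_def)
  moreover have "resample_ratio n y = a * measure_pmf.expectation (replicate_pmf n p) (\<lambda>ys. 1 / (w y + wsum ys))"
    by (simp add: resample_ratio_def a_def N_def)
  ultimately have "\<bar>resample_ratio n y - 1\<bar> \<le> 2 * M / N + M\<^sup>2 / N\<^sup>2"
    using approx first by simp
  then show ?thesis by (simp add: N_def)
qed

end

section \<open>Divergence bounds from a bounded likelihood ratio\<close>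

locale pmf_density =
  fixes p q :: "'a pmf" and \<rho> :: "'a \<Rightarrow> real"
  assumes pmf_eq_density: "pmf p y = pmf q y * \<rho> y" and density_nonneg: "0 \<le> \<rho> y"
begin

lemma density_eq: "density (measure_pmf q) (\<lambda>y. ennreal (\<rho> y)) = measure_pmf p"
proof -
  have "density (measure_pmf q) (\<lambda>y. ennreal (\<rho> y))
      = density (count_space UNIV) (\<lambda>y. ennreal (pmf q y) * ennreal (\<rho> y))"
    unfolding measure_pmf_eq_density by (subst density_density_eq) auto
  also have "(\<lambda>y. ennreal (pmf q y) * ennreal (\<rho> y)) = (\<lambda>y. ennreal (pmf p y))"
    using pmf_eq_density density_nonneg by (auto simp: ennreal_mult[symmetric] fun_eq_iff)
  finally show ?thesis by (simp add: measure_pmf_eq_density[of p])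
qed

lemma KL_divergence_eq:
  "KL_divergence (exp 1) (measure_pmf q) (measure_pmf p) = measure_pmf.expectation q (\<lambda>y. \<rho> y * ln (\<rho> y))"
  unfolding density_eq[symmetric] using density_nonneg
  by (subst sigma_finite_measure.KL_density[OF prob_space_imp_sigma_finite[OF prob_space_measure_pmf]])
    (auto simp: log_def)

lemma expectation_density: "measure_pmf.expectation q \<rho> = 1"
proof -
  have "measure_pmf.expectation q (\<lambda>y. \<rho> y * 1) = measure_pmf.expectation p (\<lambda>_. 1::real)"
    unfolding density_eq[symmetric] using density_nonneg by (subst integral_density) auto
  then show ?thesis by simp
qed

lemma KL_divergence_le_square:
  assumes B: "\<And>y. y \<in> set_pmf q \<Longrightarrow> \<bar>\<rho> y - 1\<bar> \<le> B"
  shows "KL_divergence (exp 1) (measure_pmf q) (measure_pmf p) \<le> B\<^sup>2"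
proof (cases "integrable (measure_pmf q) (\<lambda>y. \<rho> y * ln (\<rho> y))")
  case True
  have square_le: "(\<rho> y - 1)\<^sup>2 \<le> B\<^sup>2" if "y \<in> set_pmf q" for y
    using power_mono[OF B[OF that] abs_ge_zero, of 2] by simp
  have "\<bar>\<rho> y\<bar> \<le> 1 + B" if "y \<in> set_pmf q" for y
    using B[OF that] density_nonneg[of y] by simp
  then have int_\<rho>: "integrable (measure_pmf q) \<rho>" by (rule integrable_measure_pmf_bounded)
  have int_square: "integrable (measure_pmf q) (\<lambda>y. (\<rho> y - 1)\<^sup>2)"
    using square_le by (intro integrable_measure_pmf_bounded) auto
  have "\<rho> y * ln (\<rho> y) \<le> (\<rho> y - 1)\<^sup>2 + (\<rho> y - 1)" for y
  proof (cases "\<rho> y = 0")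
    case False
    then have "\<rho> y * ln (\<rho> y) \<le> \<rho> y * (\<rho> y - 1)"
      using density_nonneg[of y] ln_le_minus_one by (intro mult_left_mono) auto
    then show ?thesis by (simp add: power2_eq_square algebra_simps)
  qed simp
  then have "measure_pmf.expectation q (\<lambda>y. \<rho> y * ln (\<rho> y))
      \<le> measure_pmf.expectation q (\<lambda>y. (\<rho> y - 1)\<^sup>2 + (\<rho> y - 1))"
    using True int_\<rho> int_square by (intro integral_mono) auto
  also have "\<dots> = measure_pmf.expectation q (\<lambda>y. (\<rho> y - 1)\<^sup>2)"
    using int_\<rho> int_square expectation_density by simp
  also have "\<dots> \<le> B\<^sup>2"
    using square_le int_square by (intro measure_pmf.integral_le_const) (auto simp: AE_measure_pmf_iff)
  finally show ?thesis by (simp add: KL_divergence_eq)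
qed (simp add: KL_divergence_eq not_integrable_integral_eq)

lemma KL_divergence_le_ln:
  assumes U: "\<And>y. y \<in> set_pmf q \<Longrightarrow> \<rho> y \<le> U" and "1 \<le> U"
  shows "KL_divergence (exp 1) (measure_pmf q) (measure_pmf p) \<le> ln U"
proof (cases "integrable (measure_pmf q) (\<lambda>y. \<rho> y * ln (\<rho> y))")
  case True
  have "\<bar>\<rho> y\<bar> \<le> U" if "y \<in> set_pmf q" for y
    using U[OF that] density_nonneg[of y] by simp
  then have int_\<rho>: "integrable (measure_pmf q) \<rho>" by (rule integrable_measure_pmf_bounded)
  have "measure_pmf.expectation q (\<lambda>y. \<rho> y * ln (\<rho> y)) \<le> measure_pmf.expectation q (\<lambda>y. \<rho> y * ln U)"
  proof (intro integral_mono_AE True AE_pmfI)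
    fix y assume y: "y \<in> set_pmf q"
    show "\<rho> y * ln (\<rho> y) \<le> \<rho> y * ln U"
    proof (cases "\<rho> y = 0")
      case False
      then show ?thesis
        using U[OF y] density_nonneg[of y] by (intro mult_left_mono) auto
    qed simp
  qed (simp add: int_\<rho>)
  also have "\<dots> = ln U" using expectation_density by simp
  finally show ?thesis by (simp add: KL_divergence_eq)
qed (use \<open>1 \<le> U\<close> in \<open>simp add: KL_divergence_eq not_integrable_integral_eq\<close>)

end

lemma min_square_ln_le:
  fixes M n :: real
  assumes M: "1 \<le> M" and n: "1 \<le> n"
  shows "min ((2 * M / n + M\<^sup>2 / n\<^sup>2)\<^sup>2) (ln M) \<le> 9 * M\<^sup>2 * (1 + ln n) / n\<^sup>2"
proof (cases "M \<le> n")
  case True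
  have "M\<^sup>2 / n\<^sup>2 \<le> M / n" using True M n by (simp add: power2_eq_square field_simps mult_mono)
  then have "2 * M / n + M\<^sup>2 / n\<^sup>2 \<le> 3 * (M / n)" by simp
  moreover have "0 \<le> 2 * M / n + M\<^sup>2 / n\<^sup>2" using M n by simp
  ultimately have "(2 * M / n + M\<^sup>2 / n\<^sup>2)\<^sup>2 \<le> (3 * (M / n))\<^sup>2" by (rule power_mono)
  also have "\<dots> = 9 * M\<^sup>2 / n\<^sup>2" by (simp add: power2_eq_square field_simps)
  also have "\<dots> \<le> 9 * M\<^sup>2 * (1 + ln n) / n\<^sup>2" using n M by (simp add: divide_right_mono)
  finally show ?thesis by simp
next
  case False
  define t where "t = M / n"
  have t: "1 < t" using False n by (simp add: t_def)
  have "ln t \<le> t - 1" using t by (intro ln_le_minus_one) auto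
  also have "\<dots> \<le> 1 * t" by simp
  also have "\<dots> \<le> t\<^sup>2" using t by (simp add: power2_eq_square mult_right_mono)
  finally have "ln t \<le> t\<^sup>2" .
  moreover have "ln n \<le> t\<^sup>2 * ln n"
    using mult_right_mono[of 1 "t\<^sup>2" "ln n"] one_le_power[of t 2] t n by simp
  ultimately have "ln M \<le> t\<^sup>2 * (1 + ln n)"
    using M n by (simp add: t_def ln_div algebra_simps)
  also have "\<dots> \<le> 9 * t\<^sup>2 * (1 + ln n)" using n by simp
  also have "\<dots> = 9 * M\<^sup>2 * (1 + ln n) / n\<^sup>2" by (simp add: t_def power_divide)
  finally show ?thesis by simp
qed

section \<open>Poisson averages\<close>

lemma expectation_nat_pmf_sums:
  fixes g :: "nat \<Rightarrow> real"
  assumes g: "\<And>k. 0 \<le> g k" and sums: "(\<lambda>k. pmf p k * g k) sums S"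
  shows "measure_pmf.expectation p g = S"
proof -
  have "integrable (count_space UNIV) (\<lambda>k. pmf p k * g k)"
    unfolding integrable_count_space_nat_iff using sums_summable[OF sums] g by simp
  then have "integral\<^sup>L (count_space UNIV) (\<lambda>k. pmf p k * g k) = (\<Sum>k. pmf p k * g k)"
    by (rule integral_count_space_nat)
  moreover have "measure_pmf.expectation p g = integral\<^sup>L (count_space UNIV) (\<lambda>k. pmf p k * g k)"
    unfolding measure_pmf_eq_density by (subst integral_density) auto
  ultimately show ?thesis using sums by (simp add: sums_iff)
qed

lemma exp_series_tail_sums:
  fixes \<mu> :: real
  shows "(\<lambda>k. \<mu> ^ Suc k / fact (Suc k)) sums (exp \<mu> - 1)"
    and "(\<lambda>k. \<mu> ^ Suc (Suc k) / fact (Suc (Suc k))) sums (exp \<mu> - 1 - \<mu>)"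
proof -
  have "(\<lambda>k. \<mu> ^ k / fact k) sums exp \<mu>"
    using exp_converges[of \<mu>] by (simp add: divide_inverse mult.commute)
  then show "(\<lambda>k. \<mu> ^ Suc k / fact (Suc k)) sums (exp \<mu> - 1)"
    using sums_Suc_iff[of "\<lambda>k. \<mu> ^ k / fact k" "exp \<mu> - 1"] by simp
  then show "(\<lambda>k. \<mu> ^ Suc (Suc k) / fact (Suc (Suc k))) sums (exp \<mu> - 1 - \<mu>)"
    using sums_Suc_iff[of "\<lambda>k. \<mu> ^ Suc k / fact (Suc k)" "exp \<mu> - 1 - \<mu>"] by simp
qed

lemma expectation_poisson_inverse_Suc:
  fixes \<mu> :: real
  assumes "0 < \<mu>"
  shows "measure_pmf.expectation (poisson_pmf \<mu>) (\<lambda>k. 1 / (real k + 1)) = (1 - exp (- \<mu>)) / \<mu>"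
proof (rule expectation_nat_pmf_sums)
  have terms: "(\<lambda>k. pmf (poisson_pmf \<mu>) k * (1 / (real k + 1))) =
      (\<lambda>k. exp (- \<mu>) / \<mu> * (\<mu> ^ Suc k / fact (Suc k)))"
    using assms by (auto simp: fun_eq_iff field_simps)
  have sum: "(1 - exp (- \<mu>)) / \<mu> = exp (- \<mu>) / \<mu> * (exp \<mu> - 1)"
    by (simp add: field_simps mult_exp_exp)
  show "(\<lambda>k. pmf (poisson_pmf \<mu>) k * (1 / (real k + 1))) sums ((1 - exp (- \<mu>)) / \<mu>)"
    unfolding terms sum by (rule sums_mult[OF exp_series_tail_sums(1)])
qed simp

lemma expectation_poisson_inverse_Suc_Suc:
  fixes \<mu> :: real
  assumes "0 < \<mu>"
  shows "measure_pmf.expectation (poisson_pmf \<mu>) (\<lambda>k. 1 / ((real k + 1) * (real k + 2))) =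
    (1 - exp (- \<mu>) - \<mu> * exp (- \<mu>)) / \<mu>\<^sup>2"
proof (rule expectation_nat_pmf_sums)
  have terms: "(\<lambda>k. pmf (poisson_pmf \<mu>) k * (1 / ((real k + 1) * (real k + 2)))) =
      (\<lambda>k. exp (- \<mu>) / \<mu>\<^sup>2 * (\<mu> ^ Suc (Suc k) / fact (Suc (Suc k))))"
    using assms by (auto simp: fun_eq_iff field_simps power2_eq_square)
  have sum: "(1 - exp (- \<mu>) - \<mu> * exp (- \<mu>)) / \<mu>\<^sup>2 = exp (- \<mu>) / \<mu>\<^sup>2 * (exp \<mu> - 1 - \<mu>)"
    by (simp add: field_simps mult_exp_exp)
  show "(\<lambda>k. pmf (poisson_pmf \<mu>) k * (1 / ((real k + 1) * (real k + 2)))) sums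
      ((1 - exp (- \<mu>) - \<mu> * exp (- \<mu>)) / \<mu>\<^sup>2)"
    unfolding terms sum by (rule sums_mult[OF exp_series_tail_sums(2)])
qed simp

lemma inverse_square_log_le:
  fixes x \<mu> :: real
  assumes x: "1 \<le> x" and \<mu>: "1 \<le> \<mu>"
  shows "(1 + ln x) / x\<^sup>2 \<le> 6 * (1 + ln \<mu>) / ((x + 1) * (x + 2)) + 2 / \<mu> / (x + 1)"
proof -
  have "ln x - ln \<mu> \<le> x / \<mu> - 1"
    using x \<mu> ln_le_minus_one[of "x / \<mu>"] by (simp add: ln_div)
  then have "(1 + ln x) / x\<^sup>2 \<le> (1 + ln \<mu> + x / \<mu>) / x\<^sup>2"
    using x by (intro divide_right_mono) auto
  also have "\<dots> = (1 + ln \<mu>) * (1 / x\<^sup>2) + 1 / \<mu> * (1 / x)"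
    using x \<mu> by (simp add: field_simps power2_eq_square)
  also have "\<dots> \<le> (1 + ln \<mu>) * (6 / ((x + 1) * (x + 2))) + 1 / \<mu> * (2 / (x + 1))"
  proof (intro add_mono mult_left_mono)
    have "x \<le> x\<^sup>2" "1 \<le> x\<^sup>2"
      using x one_le_power[of x 2] mult_right_mono[of 1 x x] by (auto simp: power2_eq_square)
    then have "(x + 1) * (x + 2) \<le> 6 * x\<^sup>2" by (simp add: algebra_simps power2_eq_square)
    then have "6 / (6 * x\<^sup>2) \<le> 6 / ((x + 1) * (x + 2))"
      using x by (intro divide_left_mono) auto
    then show "1 / x\<^sup>2 \<le> 6 / ((x + 1) * (x + 2))" by simp
    show "1 / x \<le> 2 / (x + 1)" using x by (simp add: field_simps)
  qed (use \<mu> in auto)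
  finally show ?thesis by (simp add: mult.commute)
qed

lemma pmf_pos_poisson_le:
  assumes "1 \<le> \<mu>"
  shows "pmf (pos_poisson_pmf \<mu>) k \<le> 2 * pmf (poisson_pmf \<mu>) k"
proof -
  have ne: "set_pmf (poisson_pmf \<mu>) \<inter> {0<..} \<noteq> {}" using assms by auto
  have "{0::nat<..} = UNIV - {0}" by auto
  then have prob: "measure_pmf.prob (poisson_pmf \<mu>) {0<..} = 1 - exp (- \<mu>)"
    using measure_pmf.prob_compl[of "{0::nat}" "poisson_pmf \<mu>"] assms
    by (simp add: measure_pmf_single)
  have "2 \<le> exp \<mu>" using exp_ge_add_one_self[of \<mu>] assms by linarith
  then have "exp (- \<mu>) \<le> 1 / 2" by (simp add: exp_minus field_simps)
  then have "pmf (poisson_pmf \<mu>) k / (1 - exp (- \<mu>)) \<le> pmf (poisson_pmf \<mu>) k / (1 / 2)"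
    using assms by (intro divide_left_mono) auto
  then show ?thesis
    unfolding pos_poisson_pmf_def pmf_cond[OF ne] prob by auto
qed

lemma inverse_square_log_bounds:
  "0 \<le> (1 + ln (real N)) / (real N)\<^sup>2 \<and> (1 + ln (real N)) / (real N)\<^sup>2 \<le> 1"
proof (cases "N = 0")
  case False
  then have N: "1 \<le> real N" by simp
  have "1 + ln (real N) \<le> real N" using N ln_le_minus_one[of "real N"] by simp
  also have "\<dots> \<le> (real N)\<^sup>2" using N mult_right_mono[of 1 "real N" "real N"] by (simp add: power2_eq_square)
  finally show ?thesis using N by simp
qed simp

lemma integrable_inverse_square_log: "integrable (measure_pmf q) (\<lambda>N. (1 + ln (real N)) / (real N)\<^sup>2)"
  using inverse_square_log_bounds by (intro integrable_measure_pmf_bounded[where B=1]) (metis abs_of_nonneg)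

lemma integrable_inverse_Suc:
  shows "integrable (measure_pmf q) (\<lambda>k. 1 / (real k + 1))"
    and "integrable (measure_pmf q) (\<lambda>k. 1 / ((real k + 1) * (real k + 2)))"
proof -
  have "1 \<le> (real k + 1) * (real k + 2)" for k
    using mult_mono[of 1 "real k + 1" 1 "real k + 2"] by simp
  then show "integrable (measure_pmf q) (\<lambda>k. 1 / (real k + 1))"
    and "integrable (measure_pmf q) (\<lambda>k. 1 / ((real k + 1) * (real k + 2)))"
    by (auto intro!: integrable_measure_pmf_bounded[where B=1] simp: divide_le_eq)
qed

lemma expectation_poisson_inverse_le:
  fixes \<mu> a b :: real
  assumes \<mu>: "0 < \<mu>" and a: "0 \<le> a" and b: "0 \<le> b"
  shows "measure_pmf.expectation (poisson_pmf \<mu>)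
      (\<lambda>k. a * (1 / ((real k + 1) * (real k + 2))) + b * (1 / (real k + 1))) \<le> a / \<mu>\<^sup>2 + b / \<mu>"
proof -
  have "measure_pmf.expectation (poisson_pmf \<mu>)
      (\<lambda>k. a * (1 / ((real k + 1) * (real k + 2))) + b * (1 / (real k + 1))) =
      a * ((1 - exp (- \<mu>) - \<mu> * exp (- \<mu>)) / \<mu>\<^sup>2) + b * ((1 - exp (- \<mu>)) / \<mu>)"
    using \<mu> integrable_inverse_Suc
    by (simp only: Bochner_Integration.integral_add integrable_mult_right integral_mult_right_zero
      expectation_poisson_inverse_Suc expectation_poisson_inverse_Suc_Suc)
  also have "\<dots> \<le> a * (1 / \<mu>\<^sup>2) + b * (1 / \<mu>)"
  proof -
    have "0 \<le> \<mu> * exp (- \<mu>)" using \<mu> by simp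
    then have "1 - exp (- \<mu>) - \<mu> * exp (- \<mu>) \<le> 1" "1 - exp (- \<mu>) \<le> 1"
      using exp_gt_zero[of "- \<mu>"] by linarith+
    then show ?thesis using a b \<mu> by (intro add_mono mult_left_mono divide_right_mono) auto
  qed
  finally show ?thesis by simp
qed

lemma expectation_pos_poisson_log_le:
  fixes \<mu> :: real
  assumes \<mu>: "3 \<le> \<mu>"
  shows "measure_pmf.expectation (pos_poisson_pmf \<mu>) (\<lambda>N. (1 + ln (real N)) / (real N)\<^sup>2)
    \<le> 28 * ln \<mu> / \<mu>\<^sup>2"
proof -
  have ln_\<mu>: "1 \<le> ln \<mu>"
    using \<mu> exp_le by (subst ln_ge_iff) auto
  define G where
    "G k = 6 * (1 + ln \<mu>) * (1 / ((real k + 1) * (real k + 2))) + 2 / \<mu> * (1 / (real k + 1))" for k :: nat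
  have G_nonneg: "0 \<le> G k" for k using ln_\<mu> \<mu> by (simp add: G_def)
  have int_G: "integrable (measure_pmf q) G" for q
    unfolding G_def using integrable_inverse_Suc
    by (intro Bochner_Integration.integrable_add integrable_mult_right)
  have "measure_pmf.expectation (pos_poisson_pmf \<mu>) (\<lambda>N. (1 + ln (real N)) / (real N)\<^sup>2)
      \<le> measure_pmf.expectation (pos_poisson_pmf \<mu>) G"
  proof (rule expectation_pmf_mono[OF _ G_nonneg int_G])
    fix N assume "N \<in> set_pmf (pos_poisson_pmf \<mu>)"
    then have "1 \<le> N" using \<mu> unfolding pos_poisson_pmf_def by (subst (asm) set_cond_pmf) auto
    then show "(1 + ln (real N)) / (real N)\<^sup>2 \<le> G N"
      using inverse_square_log_le[of "real N" \<mu>] \<mu> by (simp add: G_def)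
  qed
  also have "\<dots> \<le> 2 * measure_pmf.expectation (poisson_pmf \<mu>) G"
    using \<mu> by (intro expectation_pmf_le_dominated pmf_pos_poisson_le G_nonneg int_G) auto
  also have "\<dots> \<le> 2 * (6 * (1 + ln \<mu>) / \<mu>\<^sup>2 + 2 / \<mu> / \<mu>)"
    unfolding G_def[abs_def] using \<mu> ln_\<mu> by (intro mult_left_mono expectation_poisson_inverse_le) auto
  also have "\<dots> \<le> 28 * ln \<mu> / \<mu>\<^sup>2"
    using ln_\<mu> \<mu> by (simp add: field_simps power2_eq_square)
  finally show ?thesis .
qed
section \<open>Sequential Monte Carlo with the target as proposal\<close>

lemma smc_pmf_eq_resample_pmf:
  "smc_pmf gen target r \<beta> N x = resample_pmf (gen x) (smc_weight gen target r \<beta> x) N"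
  by (simp add: smc_pmf_def resample_pmf_def)

lemma smc_weight_self:
  "smc_weight target target r \<beta> x y = (if pmf (target x) y = 0 then 0 else exp (\<beta> * r x y))"
  by (simp add: smc_weight_def)

lemma pmf_tilted_pmf:
  assumes "\<And>y. \<beta> * r x y \<le> c"
  shows "pmf (tilted_pmf target r \<beta> x) y =
    pmf (target x) y * exp (\<beta> * r x y) / measure_pmf.expectation (target x) (\<lambda>z. exp (\<beta> * r x z))"
proof -
  define e where "e z = exp (\<beta> * r x z)" for z
  define Z where "Z = measure_pmf.expectation (target x) e"
  have int_e: "integrable (measure_pmf (target x)) e"
    using assms by (intro integrable_measure_pmf_bounded[where B="exp c"]) (simp add: e_def)
  have e_nonneg: "0 \<le> e z" for z by (simp add: e_def)
  have Z: "0 < Z"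
    using measure_pmf.integral_less_AE_space[of "target x" "\<lambda>_. 0" e] int_e
    by (simp add: Z_def e_def)
  have "(\<integral>\<^sup>+z. ennreal (pmf (target x) z * e z / Z) \<partial>count_space UNIV) =
      (\<integral>\<^sup>+z. ennreal (e z / Z) \<partial>measure_pmf (target x))"
    using Z by (simp add: nn_integral_measure_pmf ennreal_mult'[symmetric] e_def mult.assoc)
  also have "\<dots> = ennreal (measure_pmf.expectation (target x) (\<lambda>z. e z / Z))"
    using int_e Z e_nonneg by (intro nn_integral_eq_integral AE_I2) auto
  also have "measure_pmf.expectation (target x) (\<lambda>z. e z / Z) = 1"
    using Z by (simp add: Z_def)
  finally have "pmf (tilted_pmf target r \<beta> x) y = pmf (target x) y * e y / Z"
    unfolding tilted_pmf_def e_def[symmetric] Z_def[symmetric]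
    using Z by (intro pmf_embed_pmf) (auto simp: e_def)
  then show ?thesis by (simp add: e_def[abs_def] Z_def)
qed

lemma KL_divergence_smc_tilted_le:
  assumes r: "\<And>y. 0 \<le> r x y" "\<And>y. r x y \<le> R" and \<beta>: "0 \<le> \<beta>" and N: "1 \<le> N"
  shows "KL_divergence (exp 1) (measure_pmf (tilted_pmf target r \<beta> x))
      (measure_pmf (smc_pmf target target r \<beta> N x)) \<le> 9 * exp (2 * \<beta> * R) * ((1 + ln N) / (real N)\<^sup>2)"
proof -
  obtain n where n: "N = Suc n" using N by (cases N) auto
  define w where "w = smc_weight target target r \<beta> x"
  define M where "M = exp (\<beta> * R)"
  have exp_bounds: "1 \<le> exp (\<beta> * r x y)" "exp (\<beta> * r x y) \<le> M" for y
    using r[of y] \<beta> by (auto simp: M_def mult_left_mono)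
  interpret importance_weight "target x" w M
    using exp_bounds by unfold_locales (auto simp: w_def smc_weight_self set_pmf_eq M_def)
  have "mean = measure_pmf.expectation (target x) (\<lambda>z. exp (\<beta> * r x z))"
    by (intro integral_cong_AE) (auto simp: AE_measure_pmf_iff w_def smc_weight_self set_pmf_eq)
  then have tilted: "pmf (tilted_pmf target r \<beta> x) y = pmf (target x) y * w y / mean" for y
    using pmf_tilted_pmf[of \<beta> r x "\<beta> * R" target y] r \<beta>
    by (simp add: mult_left_mono w_def smc_weight_self)
  interpret pmf_density "smc_pmf target target r \<beta> N x" "tilted_pmf target r \<beta> x" "resample_ratio n"
    by unfold_locales
      (simp_all add: n smc_pmf_eq_resample_pmf pmf_resample_pmf_eq_ratio tilted resample_ratio_nonneg flip: w_def)
  have support: "y \<in> set_pmf (target x)" if "y \<in> set_pmf (tilted_pmf target r \<beta> x)" for y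
    using that by (auto simp: set_pmf_eq tilted)
  have "KL_divergence (exp 1) (measure_pmf (tilted_pmf target r \<beta> x))
      (measure_pmf (smc_pmf target target r \<beta> N x)) \<le> min ((2 * M / N + M\<^sup>2 / (real N)\<^sup>2)\<^sup>2) (ln M)"
    using KL_divergence_le_square[OF abs_resample_ratio_minus_one_le[OF support]]
      KL_divergence_le_ln[OF resample_ratio_le[OF support] one_le_M]
    by (simp add: n)
  also have "\<dots> \<le> 9 * M\<^sup>2 * (1 + ln N) / (real N)\<^sup>2"
    using min_square_ln_le[OF one_le_M, of N] N by simp
  also have "M\<^sup>2 = exp (2 * \<beta> * R)"
    by (simp add: M_def power2_eq_square mult_exp_exp)
  finally show ?thesis by simp
qed

lemma avg_KL_smc_tilted_le:
  assumes "\<forall>x y. 0 \<le> r x y \<and> r x y \<le> R" and "0 \<le> \<beta>" and "1 \<le> N"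
  shows "avg_KL \<rho> (smc_pmf target target r \<beta> N) (tilted_pmf target r \<beta>)
    \<le> 9 * exp (2 * \<beta> * R) * ((1 + ln N) / (real N)\<^sup>2)"
  unfolding avg_KL_def using assms
  by (intro expectation_pmf_le_const KL_divergence_smc_tilted_le) auto

lemma avg_KL_smc_tilted_le_powr:
  assumes "\<forall>x y. 0 \<le> r x y \<and> r x y \<le> R" and "0 \<le> \<beta>" and n: "3 \<le> n"
  shows "avg_KL \<rho> (smc_pmf target target r \<beta> n) (tilted_pmf target r \<beta>)
    \<le> 252 * exp (2 * \<beta> * R) * ln n / real n powr (3/2)"
proof -
  have ln_n: "1 \<le> ln (real n)" using n exp_le by (subst ln_ge_iff) auto
  have "avg_KL \<rho> (smc_pmf target target r \<beta> n) (tilted_pmf target r \<beta>)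
      \<le> 9 * exp (2 * \<beta> * R) * ((1 + ln n) / (real n)\<^sup>2)"
    by (rule avg_KL_smc_tilted_le) (use assms in auto)
  also have "\<dots> \<le> 252 * exp (2 * \<beta> * R) * ln n / (real n)\<^sup>2"
    using ln_n by (simp add: divide_right_mono)
  also have "\<dots> \<le> 252 * exp (2 * \<beta> * R) * ln n / real n powr (3/2)"
    using n ln_n powr_mono[of "3/2" 2 "real n"] by (intro divide_left_mono) auto
  finally show ?thesis .
qed

lemma expectation_pos_poisson_avg_KL_smc_le:
  assumes r: "\<forall>x y. 0 \<le> r x y \<and> r x y \<le> R" and \<beta>: "0 \<le> \<beta>" and n: "3 \<le> n"
  shows "measure_pmf.expectation (pos_poisson_pmf (real n))
      (\<lambda>N. avg_KL \<rho> (smc_pmf target target r \<beta> N) (tilted_pmf target r \<beta>))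
    \<le> 252 * exp (2 * \<beta> * R) * ln n / (real n)\<^sup>2"
proof -
  have nonneg: "0 \<le> 9 * exp (2 * \<beta> * R) * ((1 + ln N) / (real N)\<^sup>2)" for N
    using inverse_square_log_bounds[of N] by (intro mult_nonneg_nonneg) auto
  have integrable: "integrable (measure_pmf (pos_poisson_pmf (real n)))
      (\<lambda>N. 9 * exp (2 * \<beta> * R) * ((1 + ln N) / (real N)\<^sup>2))"
    by (intro integrable_mult_right integrable_inverse_square_log)
  have "measure_pmf.expectation (pos_poisson_pmf (real n))
      (\<lambda>N. avg_KL \<rho> (smc_pmf target target r \<beta> N) (tilted_pmf target r \<beta>))
    \<le> measure_pmf.expectation (pos_poisson_pmf (real n))
      (\<lambda>N. 9 * exp (2 * \<beta> * R) * ((1 + ln N) / (real N)\<^sup>2))"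
  proof (rule expectation_pmf_mono[OF _ nonneg integrable])
    fix N assume "N \<in> set_pmf (pos_poisson_pmf (real n))"
    then have "1 \<le> N" using n unfolding pos_poisson_pmf_def by (subst (asm) set_cond_pmf) auto
    then show "avg_KL \<rho> (smc_pmf target target r \<beta> N) (tilted_pmf target r \<beta>)
        \<le> 9 * exp (2 * \<beta> * R) * ((1 + ln N) / (real N)\<^sup>2)"
      using avg_KL_smc_tilted_le r \<beta> by blast
  qed
  also have "\<dots> = 9 * exp (2 * \<beta> * R) *
      measure_pmf.expectation (pos_poisson_pmf (real n)) (\<lambda>N. (1 + ln N) / (real N)\<^sup>2)"
    by (rule integral_mult_right_zero)
  also have "\<dots> \<le> 9 * exp (2 * \<beta> * R) * (28 * ln n / (real n)\<^sup>2)"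
    using n by (intro mult_left_mono expectation_pos_poisson_log_le) auto
  finally show ?thesis by simp
qed

theorem corollaryB8:
  "\<exists>C > 0. \<exists>k :: nat.
     \<forall>(\<rho> :: nat pmf) (target :: nat \<Rightarrow> nat pmf) (Y :: nat set) (r :: nat \<Rightarrow> nat \<Rightarrow> real)
       (R :: real) (\<beta> :: real) (n :: nat).
       (\<forall>x. set_pmf (target x) = Y) \<longrightarrow>
       (\<forall>x y. 0 \<le> r x y \<and> r x y \<le> R) \<longrightarrow>
       \<beta> > 0 \<longrightarrow> n \<ge> 3 \<longrightarrow>
       measure_pmf.expectation (pos_poisson_pmf (real n))
          (\<lambda>N. avg_KL \<rho> (smc_pmf target target r \<beta> N) (tilted_pmf target r \<beta>))
         \<le> C * exp (2 * \<beta> * R) * ln (real n) ^ k / (real n) ^ 2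
       \<and> avg_KL \<rho> (smc_pmf target target r \<beta> n) (tilted_pmf target r \<beta>)
         \<le> C * exp (2 * \<beta> * R) * ln (real n) ^ k / (real n) powr (3/2)"
proof (intro exI[of _ "252::real"] conjI exI[of _ "1::nat"] allI impI)
  fix \<rho> :: "nat pmf" and target :: "nat \<Rightarrow> nat pmf" and Y :: "nat set"
    and r :: "nat \<Rightarrow> nat \<Rightarrow> real" and R \<beta> :: real and n :: nat
  assume r: "\<forall>x y. 0 \<le> r x y \<and> r x y \<le> R" and "0 < \<beta>" and n: "3 \<le> n"
  then have \<beta>: "0 \<le> \<beta>" by simp
  show "measure_pmf.expectation (pos_poisson_pmf (real n))
      (\<lambda>N. avg_KL \<rho> (smc_pmf target target r \<beta> N) (tilted_pmf target r \<beta>))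
    \<le> 252 * exp (2 * \<beta> * R) * ln (real n) ^ 1 / (real n) ^ 2"
    using expectation_pos_poisson_avg_KL_smc_le[OF r \<beta> n] by simp
  show "avg_KL \<rho> (smc_pmf target target r \<beta> n) (tilted_pmf target r \<beta>)
    \<le> 252 * exp (2 * \<beta> * R) * ln (real n) ^ 1 / (real n) powr (3/2)"
    using avg_KL_smc_tilted_le_powr[OF r \<beta> n] by simp
qed simp

end
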